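(* Let $\mathcal C$ be a Suslin scheme in a topological space $Y$ consisting of closed subsets of $Y$, and let $T$ be a nonempty well-founded tree with leaf rank $r_l(T)=\lambda+n$ ($\lambda$ limit or $0$, $n\in\omega$). Then (i) $\mathbf R_T(\mathcal C)\in\mathcal F_{\lambda+2n}(Y)$; (ii) if $T\ne\{\emptyset\}$ and $\mathrm{ims}_T(\emptyset)$ is finite, then $n\ge1$ and $\mathbf R_T(\mathcal C)\in\mathcal F_{\lambda+2n-1}(Y)$.
   Context: $\mathcal F$-Borel hierarchy: $\mathcal F_0(Y)$ closed sets; for $0<\alpha<\omega_1$, $\mathcal F_\alpha(Y)$ = countable unions (odd $\alpha$) or countable intersections (even $\alpha$) of members of $\bigcup_{\beta<\alpha}\mathcal F_\beta(Y)$, with $\lambda+m$ ($\lambda$ limit or 0) having the parity of $m$. A tree is a subset of $\omega^{<\omega}$ closed under initial segments, well-founded if it has no infinite branch; $\mathrm{ims}_T(t)=\{t^\frown n\in T\}$, $T^t=\{t':t^\frown t'\in T\}$; leaf rank $r_l(T^t)=\sup\{r_l(T^s)+1:s\in\mathrm{ims}_T(t)\}$ ($\sup\emptyset=0$), $r_l(T)=r_l(T^\emptyset)$. A Suslin scheme is a family $(C(s))_{s\in\omega^{<\omega}}$ with $C(t)\subset C(s)$ whenever $t$ extends $s$. A map $\varphi:T\to\omega^{<\omega}$ is admissible if it is monotone w.r.t. extension and $|\varphi(t)|=t(0)+\dots+t(k)$ for $t=(t(0),\dots,t(k))$. $\mathbf R_T(\mathcal C)=\{x\in C(\emptyset):\exists$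 admissible $\varphi:T\to\omega^{<\omega}$ with $x\in C(\varphi(t))$ for all $t\in T\}$. *)

theory Defs
  imports Complex_Main
begin

text \<open>W is the cardinal successor of aleph_0 as a well-order (an initial ordinal);
its field, ordered by W, is a copy of omega_1. Ordinals below omega_1 are
represented by the elements of Field W.\<close>

definition W :: "nat set rel" where
  "W = cardSuc natLeq"

type_synonym ord1 = "nat set"

definition oless :: "ord1 \<Rightarrow> ord1 \<Rightarrow> bool" where
  "oless a b \<longleftrightarrow> (a, b) \<in> W \<and> a \<noteq> b"

definition ozero :: ord1 where
  "ozero = wo_rel.minim W (Field W)"

definition osucc :: "ord1 \<Rightarrow> ord1" where
  "osucc a = wo_rel.suc W {a}"

text \<open>supremum (least upper bound); sup of the empty set is 0\<close>
definition osup :: "ord1 set \<Rightarrow> ord1" where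
  "osup A = wo_rel.supr W A"

definition oadd_nat :: "ord1 \<Rightarrow> nat \<Rightarrow> ord1" where
  "oadd_nat a n = (osucc ^^ n) a"

definition limit_or_zero :: "ord1 \<Rightarrow> bool" where
  "limit_or_zero l \<longleftrightarrow> l \<in> Field W \<and> (\<forall>b \<in> Field W. osucc b \<noteq> l)"

definition oeven :: "ord1 \<Rightarrow> bool" where
  "oeven a \<longleftrightarrow> (\<exists>l m. limit_or_zero l \<and> a = oadd_nat l m \<and> even m)"

definition Fclass :: "ord1 \<Rightarrow> 'a::topological_space set set" where
  "Fclass a0 = wfrec (W - Id)
     (\<lambda>g a. if a = ozero then {A. closed A}
            else if oeven a
              then {\<Inter>(range f) | f :: nat \<Rightarrow> 'a set. \<forall>k. f k \<in> \<Union>(g ` {b. oless b a})}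
              else {\<Union>(range f) | f :: nat \<Rightarrow> 'a set. \<forall>k. f k \<in> \<Union>(g ` {b. oless b a})}) a0"

definition extends :: "nat list \<Rightarrow> nat list \<Rightarrow> bool" where
  "extends t s \<longleftrightarrow> (\<exists>u. t = s @ u)"

definition is_tree :: "nat list set \<Rightarrow> bool" where
  "is_tree T \<longleftrightarrow> (\<forall>t \<in> T. \<forall>s. extends t s \<longrightarrow> s \<in> T)"

definition well_founded_tree :: "nat list set \<Rightarrow> bool" where
  "well_founded_tree T \<longleftrightarrow> \<not> (\<exists>x :: nat \<Rightarrow> nat. \<forall>k. map x [0..<k] \<in> T)"

definition ims :: "nat list set \<Rightarrow> nat list \<Rightarrow> nat list set" where
  "ims T t = {t @ [n] | n. t @ [n] \<in> T}"

definition subtree :: "nat list set \<Rightarrow> nat list \<Rightarrow> nat list set" where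
  "subtree T t = {t'. t @ t' \<in> T}"

text \<open>one-step extension relation on nodes of T (well-founded iff T is)\<close>
definition child_rel :: "nat list set \<Rightarrow> (nat list \<times> nat list) set" where
  "child_rel T = {(t @ [n], t) | t n. t @ [n] \<in> T}"

text \<open>node_rank T t = r_l(T^t) = sup { r_l(T^s) + 1 : s in ims_T(t) }\<close>
definition node_rank :: "nat list set \<Rightarrow> nat list \<Rightarrow> ord1" where
  "node_rank T = wfrec (child_rel T) (\<lambda>g t. osup ((\<lambda>s. osucc (g s)) ` ims T t))"

definition leaf_rank :: "nat list set \<Rightarrow> ord1" where
  "leaf_rank T = node_rank T []"

definition suslin_scheme :: "(nat list \<Rightarrow> 'a set) \<Rightarrow> bool" where
  "suslin_scheme C \<longleftrightarrow> (\<forall>s t. extends t s \<longrightarrow> C t \<subseteq> C s)"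

definition admissible :: "nat list set \<Rightarrow> (nat list \<Rightarrow> nat list) \<Rightarrow> bool" where
  "admissible T \<phi> \<longleftrightarrow>
     (\<forall>s \<in> T. \<forall>t \<in> T. extends t s \<longrightarrow> extends (\<phi> t) (\<phi> s)) \<and>
     (\<forall>t \<in> T. length (\<phi> t) = sum_list t)"

definition R_op :: "nat list set \<Rightarrow> (nat list \<Rightarrow> 'a set) \<Rightarrow> 'a set" where
  "R_op T C = {x \<in> C []. \<exists>\<phi>. admissible T \<phi> \<and> (\<forall>t \<in> T. x \<in> C (\<phi> t))}"

end

theory Submission
  imports Defs "HOL-Library.Countable_Set_Type"
begin

text \<open>Induction on the nodes of the well-founded tree. Splitting an admissible map at the root into
  the strings s = phi([k]) of length k and admissible maps on the subtrees T^(k) gives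
  R_T(C) = C(\<emptyset>) \<inter> \<Inter>_k \<Union>_{|s| = k} R_{T^(k)}(C_s), where C_s(u) = C(s @ u) is again a closed
  scheme. By induction a child of rank \<lambda>_k + n_k < \<lambda> + n yields sets in F_{\<lambda>_k + 2n_k}, their
  countable unions lie in F_{\<lambda>_k + 2n_k + 1}, and \<lambda>_k + 2n_k + 1 < \<lambda> + 2n; so the countable
  intersection lies in F_{\<lambda> + 2n}. If the root has finitely many children, its rank is the successor
  \<lambda> + m + 1 of the largest child rank, every child has rank at most \<lambda> + m, and the finite
  intersection stays in F_{\<lambda> + 2m + 1}: this class is closed under finite intersections because
  F_{\<lambda> + 2m} is closed under countable ones.\<close>

unbundle cardinal_syntax

section \<open>Countable ordinals\<close>

lemma wo_rel_W: "wo_rel W"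
  unfolding W_def wo_rel_def using cardSuc_Card_order[OF natLeq_Card_order]
  by (simp add: card_order_on_def)

interpretation W: wo_rel W
  by (rule wo_rel_W)

lemma infinite_Field_W: "infinite (Field W)"
  using Cinfinite_cardSuc[OF natLeq_Cinfinite] unfolding W_def cinfinite_def by simp

lemma W_refl: "a \<in> Field W \<Longrightarrow> (a, a) \<in> W"
  using W.REFL by (simp add: refl_on_def)

lemma W_trans: "(a, b) \<in> W \<Longrightarrow> (b, c) \<in> W \<Longrightarrow> (a, c) \<in> W"
  using W.TRANS by (blast elim: transE)

lemma W_antisym: "(a, b) \<in> W \<Longrightarrow> (b, a) \<in> W \<Longrightarrow> a = b"
  using W.ANTISYM by (blast dest: antisymD)

lemma W_total: "a \<in> Field W \<Longrightarrow> b \<in> Field W \<Longrightarrow> (a, b) \<in> W \<or> (b, a) \<in> W"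
  using W.TOTALS by blast

lemma countable_bounded_in_W:
  assumes "A \<subseteq> Field W" "countable A"
  shows "\<exists>b \<in> Field W. \<forall>a \<in> A. (a, b) \<in> W"
proof (rule ccontr)
  assume unbounded: "\<not> ?thesis"
  have "cofinal A W"
    unfolding cofinal_def
  proof
    fix a assume a: "a \<in> Field W"
    then obtain b where b: "b \<in> A" "(b, a) \<notin> W" using unbounded by blast
    then have "(a, b) \<in> W" using W_total a assms(1) by blast
    moreover have "a \<noteq> b" using b(2) W_refl a by blast
    ultimately show "\<exists>b\<in>A. a \<noteq> b \<and> (a, b) \<in> W" using b(1) by blast
  qed
  then have "|A| =o W"
    using regularCard_cardSuc[OF natLeq_Cinfinite] assms(1) unfolding W_def regularCard_def by blast
  moreover have "|A| <o W"
    using assms(2) countable_card_le_natLeq cardSuc_greater[OF natLeq_Card_order] ordLeq_ordLess_trans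
    unfolding W_def by blast
  ultimately show False using not_ordLess_ordIso by blast
qed

lemma oless_trans: "oless a b \<Longrightarrow> oless b c \<Longrightarrow> oless a c"
  unfolding oless_def using W_trans W_antisym by blast

lemma oless_le_trans: "oless a b \<Longrightarrow> (b, c) \<in> W \<Longrightarrow> oless a c"
  unfolding oless_def using W_trans W_antisym by blast

lemma le_oless_trans: "(a, b) \<in> W \<Longrightarrow> oless b c \<Longrightarrow> oless a c"
  unfolding oless_def using W_trans W_antisym by blast

lemma oless_imp_le: "oless a b \<Longrightarrow> (a, b) \<in> W"
  unfolding oless_def by simp

lemma oless_irrefl: "\<not> oless a a"
  unfolding oless_def by simp

lemma oless_imp_not_le: "oless a b \<Longrightarrow> (b, a) \<notin> W"
  unfolding oless_def using W_antisym by blast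

lemma not_le_imp_oless: "a \<in> Field W \<Longrightarrow> b \<in> Field W \<Longrightarrow> (a, b) \<notin> W \<Longrightarrow> oless b a"
  unfolding oless_def using W_total by blast

lemma oless_linear: "a \<in> Field W \<Longrightarrow> b \<in> Field W \<Longrightarrow> oless a b \<or> a = b \<or> oless b a"
  unfolding oless_def using W_total by blast

lemma ozero_least: "a \<in> Field W \<Longrightarrow> (ozero, a) \<in> W"
  unfolding ozero_def using W.minim_least by blast

lemma not_oless_ozero: "\<not> oless a ozero"
  using ozero_least oless_imp_not_le unfolding oless_def by (blast intro: FieldI1)

lemma osucc_in_Field: "a \<in> Field W \<Longrightarrow> osucc a \<in> Field W"
  and oless_osucc: "a \<in> Field W \<Longrightarrow> oless a (osucc a)"
proof -
  assume a: "a \<in> Field W"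
  obtain c where "c \<in> Field W" "a \<noteq> c" "(a, c) \<in> W"
    using infinite_Card_order_limit[OF cardSuc_Card_order[OF natLeq_Card_order], folded W_def,
        OF infinite_Field_W a] by blast
  then have "AboveS W {a} \<noteq> {}" unfolding AboveS_def by blast
  then show "osucc a \<in> Field W" "oless a (osucc a)"
    unfolding osucc_def oless_def using W.suc_inField[of "{a}"] W.suc_greater[of "{a}" a] a by auto
qed

lemma osucc_least: "oless a b \<Longrightarrow> (osucc a, b) \<in> W"
  unfolding osucc_def
  by (rule W.suc_least_AboveS) (unfold AboveS_def oless_def, blast intro: FieldI2)

lemma oless_osucc_iff_le:
  assumes a: "a \<in> Field W"
  shows "oless b (osucc a) \<longleftrightarrow> b \<in> Field W \<and> (b, a) \<in> W"
proof
  assume b: "oless b (osucc a)"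
  then have "b \<in> Field W" unfolding oless_def by (blast intro: FieldI1)
  moreover have "\<not> oless a b" using b osucc_least oless_imp_not_le by blast
  ultimately show "b \<in> Field W \<and> (b, a) \<in> W" using not_le_imp_oless a by blast
next
  assume "b \<in> Field W \<and> (b, a) \<in> W"
  then show "oless b (osucc a)" using le_oless_trans oless_osucc[OF a] by blast
qed

lemma osucc_inject:
  assumes "a \<in> Field W" "b \<in> Field W" "osucc a = osucc b"
  shows "a = b"
proof -
  have "(a, b) \<in> W"
    using oless_osucc[OF assms(1)] oless_osucc_iff_le[OF assms(2)] assms(3) by simp
  moreover have "(b, a) \<in> W"
    using oless_osucc[OF assms(2)] oless_osucc_iff_le[OF assms(1)] assms(3) by simp
  ultimately show ?thesis by (rule W_antisym)
qed

lemma osucc_ne_ozero: "a \<in> Field W \<Longrightarrow> osucc a \<noteq> ozero"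
  using oless_osucc not_oless_ozero by force

lemma osup_in_Field: "A \<subseteq> Field W \<Longrightarrow> countable A \<Longrightarrow> osup A \<in> Field W"
  and osup_upper: "A \<subseteq> Field W \<Longrightarrow> countable A \<Longrightarrow> a \<in> A \<Longrightarrow> (a, osup A) \<in> W"
  and osup_least: "A \<subseteq> Field W \<Longrightarrow> countable A \<Longrightarrow> b \<in> Field W \<Longrightarrow> \<forall>a\<in>A. (a, b) \<in> W
    \<Longrightarrow> (osup A, b) \<in> W"
proof -
  assume A: "A \<subseteq> Field W" "countable A"
  have ne: "Above W A \<noteq> {}" and sub: "Above W A \<subseteq> Field W"
    using countable_bounded_in_W[OF A] unfolding Above_def by blast+
  have "osup A \<in> Above W A"
    unfolding osup_def W.supr_def using W.minim_in[OF sub ne] .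
  then show "osup A \<in> Field W" "a \<in> A \<Longrightarrow> (a, osup A) \<in> W"
    unfolding Above_def by auto
  show "b \<in> Field W \<Longrightarrow> \<forall>a\<in>A. (a, b) \<in> W \<Longrightarrow> (osup A, b) \<in> W"
    unfolding osup_def W.supr_def using W.minim_least[OF sub] unfolding Above_def by blast
qed

lemma osup_finite_in:
  assumes "A \<subseteq> Field W" "finite A" "A \<noteq> {}"
  shows "osup A \<in> A"
proof -
  have "\<exists>m\<in>A. \<forall>a\<in>A. (a, m) \<in> W"
    using assms(2,3,1)
  proof (induction A rule: finite_ne_induct)
    case (singleton x)
    then show ?case using W_refl by auto
  next
    case (insert x F)
    then obtain m where "m \<in> F" "\<forall>a\<in>F. (a, m) \<in> W" by auto
    then show ?case
      using W_total[of x m] W_trans W_refl insert.prems by blast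
  qed
  then obtain m where "m \<in> A" "\<forall>a\<in>A. (a, m) \<in> W" by blast
  moreover have "osup A = m"
    using calculation osup_upper osup_least assms(1) countable_finite[OF assms(2)] W_antisym
    by (meson subsetD)
  ultimately show ?thesis by simp
qed

lemma oadd_nat_0 [simp]: "oadd_nat a 0 = a"
  unfolding oadd_nat_def by simp

lemma oadd_nat_Suc [simp]: "oadd_nat a (Suc m) = osucc (oadd_nat a m)"
  unfolding oadd_nat_def by simp

lemma oadd_nat_in_Field: "a \<in> Field W \<Longrightarrow> oadd_nat a m \<in> Field W"
  by (induction m) (simp_all add: osucc_in_Field)

lemma oadd_nat_strict_mono:
  assumes a: "a \<in> Field W"
  shows "j < k \<Longrightarrow> oless (oadd_nat a j) (oadd_nat a k)"
proof (induction k)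
  case (Suc k)
  have step: "oless (oadd_nat a k) (oadd_nat a (Suc k))"
    using oless_osucc[OF oadd_nat_in_Field[OF a]] by simp
  show ?case
  proof (cases "j = k")
    case False
    then have "oless (oadd_nat a j) (oadd_nat a k)" using Suc by simp
    then show ?thesis using step by (rule oless_trans)
  qed (use step in simp)
qed simp

lemma oadd_nat_less_iff: "a \<in> Field W \<Longrightarrow> oless (oadd_nat a j) (oadd_nat a k) \<longleftrightarrow> j < k"
  using oadd_nat_strict_mono[of a k j] oadd_nat_strict_mono[of a j k] oless_trans oless_irrefl
  by (cases j k rule: linorder_cases) blast+

lemma oadd_nat_le_iff:
  assumes a: "a \<in> Field W"
  shows "(oadd_nat a j, oadd_nat a k) \<in> W \<longleftrightarrow> j \<le> k"
proof
  assume le: "(oadd_nat a j, oadd_nat a k) \<in> W"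
  show "j \<le> k"
  proof (rule ccontr)
    assume "\<not> j \<le> k"
    then have "oless (oadd_nat a k) (oadd_nat a j)" by (intro oadd_nat_strict_mono[OF a]) simp
    then show False using le by (blast dest: oless_imp_not_le)
  qed
next
  assume "j \<le> k"
  then consider "j = k" | "j < k" by linarith
  then show "(oadd_nat a j, oadd_nat a k) \<in> W"
  proof cases
    case 1
    then show ?thesis using W_refl[OF oadd_nat_in_Field[OF a]] by simp
  next
    case 2
    then show ?thesis using oless_imp_le[OF oadd_nat_strict_mono[OF a]] by simp
  qed
qed

lemma le_oadd_nat: "a \<in> Field W \<Longrightarrow> (a, oadd_nat a m) \<in> W"
  using oadd_nat_le_iff[of a 0 m] by simp

lemma limit_or_zero_in_Field: "limit_or_zero l \<Longrightarrow> l \<in> Field W"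
  unfolding limit_or_zero_def by simp

lemma osucc_ne_limit: "limit_or_zero l \<Longrightarrow> a \<in> Field W \<Longrightarrow> osucc a \<noteq> l"
  by (simp add: limit_or_zero_def)

lemma oadd_nat_less_limit:
  assumes l: "limit_or_zero l" and b: "oless b l"
  shows "oless (oadd_nat b m) l"
proof (induction m)
  case (Suc m)
  have "oadd_nat b m \<in> Field W"
    using Suc unfolding oless_def by (blast intro: FieldI1)
  then have "osucc (oadd_nat b m) \<noteq> l" by (rule osucc_ne_limit[OF l])
  then show ?case
    using osucc_least[OF Suc] unfolding oless_def by simp
qed (simp add: b)

lemma oadd_nat_limit_inject:
  assumes l: "limit_or_zero l" "limit_or_zero l'" and eq: "oadd_nat l m = oadd_nat l' m'"
  shows "l = l' \<and> m = m'"
  using eq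
proof (induction m arbitrary: m')
  case 0
  show ?case
  proof (cases m')
    case (Suc k)
    then have "l = osucc (oadd_nat l' k)" using "0" by simp
    moreover have "osucc (oadd_nat l' k) \<noteq> l"
      using osucc_ne_limit[OF l(1) oadd_nat_in_Field[OF limit_or_zero_in_Field[OF l(2)]]] .
    ultimately show ?thesis by simp
  qed (use "0" in simp)
next
  case (Suc m)
  show ?case
  proof (cases m')
    case 0
    then have "l' = osucc (oadd_nat l m)" using Suc.prems by simp
    moreover have "osucc (oadd_nat l m) \<noteq> l'"
      using osucc_ne_limit[OF l(2) oadd_nat_in_Field[OF limit_or_zero_in_Field[OF l(1)]]] .
    ultimately show ?thesis by simp
  next
    case (Suc k)
    then have "osucc (oadd_nat l m) = osucc (oadd_nat l' k)" using Suc.prems by simp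
    then have "oadd_nat l m = oadd_nat l' k"
      by (rule osucc_inject[OF oadd_nat_in_Field oadd_nat_in_Field, OF limit_or_zero_in_Field[OF l(1)]
            limit_or_zero_in_Field[OF l(2)]])
    then show ?thesis using Suc.IH Suc by simp
  qed
qed

lemma limit_decomposition: "a \<in> Field W \<Longrightarrow> \<exists>l m. limit_or_zero l \<and> a = oadd_nat l m"
proof (induction a rule: wf_induct[OF W.WF])
  case (1 a)
  show ?case
  proof (cases "limit_or_zero a")
    case True
    then have "limit_or_zero a \<and> a = oadd_nat a 0" by simp
    then show ?thesis by (intro exI)
  next
    case False
    then have "\<exists>b\<in>Field W. osucc b = a"
      using "1.prems" unfolding limit_or_zero_def by simp
    then obtain b where b: "b \<in> Field W" "osucc b = a" ..
    have "oless b a"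
      using oless_osucc[OF b(1)] unfolding b(2) .
    then have "(b, a) \<in> W - Id"
      unfolding oless_def by simp
    then obtain l m where "limit_or_zero l" "b = oadd_nat l m"
      using "1.IH" b(1) by (elim allE impE exE conjE)
    then have "limit_or_zero l \<and> a = oadd_nat l (Suc m)" using b(2) by simp
    then show ?thesis by (intro exI)
  qed
qed

lemma oeven_oadd_nat_double: "limit_or_zero l \<Longrightarrow> oeven (oadd_nat l (2 * m))"
  unfolding oeven_def by (intro exI[of _ l] exI[of _ "2 * m"]) simp

lemma not_oeven_oadd_nat_odd: "limit_or_zero l \<Longrightarrow> \<not> oeven (oadd_nat l (Suc (2 * m)))"
proof
  assume l: "limit_or_zero l" and "oeven (oadd_nat l (Suc (2 * m)))"
  then obtain l' m' where l': "limit_or_zero l'" and eq: "oadd_nat l (Suc (2 * m)) = oadd_nat l' m'"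
    and "even m'"
    unfolding oeven_def by (elim exE conjE)
  have "Suc (2 * m) = m'" using oadd_nat_limit_inject[OF l l' eq] ..
  with \<open>even m'\<close> show False by auto
qed

lemma oadd_nat_double_less:
  assumes l: "limit_or_zero l" "limit_or_zero l'"
    and less: "oless (oadd_nat l' m') (oadd_nat l m)"
  shows "oless (oadd_nat l' (Suc (2 * m'))) (oadd_nat l (2 * m))"
proof -
  have F: "l \<in> Field W" "l' \<in> Field W" using l limit_or_zero_in_Field by auto
  consider "l' = l" | "oless l' l" | "oless l l'" using oless_linear F by blast
  then show ?thesis
  proof cases
    case 1
    then have "Suc (2 * m') < 2 * m" using less oadd_nat_less_iff[OF F(1)] by simp
    then show ?thesis using 1 oadd_nat_strict_mono[OF F(1)] by blast
  next
    case 2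
    show ?thesis
      by (rule oless_le_trans[OF oadd_nat_less_limit[OF l(1) 2] le_oadd_nat[OF F(1)]])
  next
    case 3
    have "oless (oadd_nat l m) (oadd_nat l' m')"
      by (rule oless_le_trans[OF oadd_nat_less_limit[OF l(2) 3] le_oadd_nat[OF F(2)]])
    then show ?thesis using oless_trans[OF less] oless_irrefl by blast
  qed
qed

lemma oadd_nat_double_le:
  assumes l: "limit_or_zero l" "limit_or_zero l'"
    and le: "(oadd_nat l' m', oadd_nat l m) \<in> W"
  shows "(oadd_nat l' (2 * m'), oadd_nat l (2 * m)) \<in> W"
proof -
  have F: "l \<in> Field W" "l' \<in> Field W" using l limit_or_zero_in_Field by auto
  consider "l' = l" | "oless l' l" | "oless l l'" using oless_linear F by blast
  then show ?thesis
  proof cases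
    case 1
    then show ?thesis using le oadd_nat_le_iff[OF F(1)] by simp
  next
    case 2
    have "oless (oadd_nat l' (2 * m')) (oadd_nat l (2 * m))"
      by (rule oless_le_trans[OF oadd_nat_less_limit[OF l(1) 2] le_oadd_nat[OF F(1)]])
    then show ?thesis unfolding oless_def by simp
  next
    case 3
    have "oless (oadd_nat l m) (oadd_nat l' m')"
      by (rule oless_le_trans[OF oadd_nat_less_limit[OF l(2) 3] le_oadd_nat[OF F(2)]])
    then show ?thesis using le oless_imp_not_le by blast
  qed
qed

section \<open>The \<open>\<F>\<close>-Borel classes\<close>

lemma Fclass_unfold: "(Fclass a :: 'a::topological_space set set) =
   (if a = ozero then {A. closed A}
    else if oeven a
      then {\<Inter>(range f) | f :: nat \<Rightarrow> 'a set. \<forall>k. f k \<in> \<Union>(Fclass ` {b. oless b a})}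
      else {\<Union>(range f) | f :: nat \<Rightarrow> 'a set. \<forall>k. f k \<in> \<Union>(Fclass ` {b. oless b a})})"
proof -
  have cut: "cut g (W - Id) a ` {b. oless b a} = g ` {b. oless b a}" for g :: "ord1 \<Rightarrow> 'a set set"
    by (rule image_cong) (auto simp: cut_apply oless_def)
  show ?thesis
    unfolding Fclass_def by (subst wfrec[OF W.WF]) (simp only: cut)
qed

lemma Fclass_ozero: "Fclass ozero = {A. closed A}"
  by (subst Fclass_unfold) simp

lemma Fclass_even_eq: "a \<noteq> ozero \<Longrightarrow> oeven a \<Longrightarrow> (Fclass a :: 'a::topological_space set set) =
    {\<Inter>(range f) | f :: nat \<Rightarrow> 'a set. \<forall>k. \<exists>b. oless b a \<and> f k \<in> Fclass b}"
  by (subst Fclass_unfold) simp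

lemma Fclass_odd_eq: "a \<noteq> ozero \<Longrightarrow> \<not> oeven a \<Longrightarrow> (Fclass a :: 'a::topological_space set set) =
    {\<Union>(range f) | f :: nat \<Rightarrow> 'a set. \<forall>k. \<exists>b. oless b a \<and> f k \<in> Fclass b}"
  by (subst Fclass_unfold) simp

lemma countable_family_as_sequence:
  assumes "countable I" "I \<noteq> {}" "\<forall>i\<in>I. P (X i)"
  obtains f :: "nat \<Rightarrow> 'b" where "range f = X ` I" "\<forall>k. P (f k)"
proof
  show "range (X \<circ> from_nat_into I) = X ` I"
    unfolding image_comp[symmetric] range_from_nat_into[OF assms(2,1)] ..
  show "\<forall>k. P ((X \<circ> from_nat_into I) k)"
    using from_nat_into[OF assms(2)] assms(3) by simp
qed

lemma Fclass_INT:
  fixes X :: "'i \<Rightarrow> 'a::topological_space set"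
  assumes "a \<noteq> ozero" "oeven a" "countable I" "I \<noteq> {}"
    and "\<forall>i\<in>I. \<exists>b. oless b a \<and> X i \<in> Fclass b"
  shows "(\<Inter>i\<in>I. X i) \<in> Fclass a"
proof -
  obtain f :: "nat \<Rightarrow> 'a set" where f: "range f = X ` I" "\<forall>k. \<exists>b. oless b a \<and> f k \<in> Fclass b"
    using countable_family_as_sequence[where P = "\<lambda>Y. \<exists>b. oless b a \<and> Y \<in> Fclass b",
        OF assms(3-5)] .
  show ?thesis
    unfolding Fclass_even_eq[OF assms(1,2)] mem_Collect_eq
    by (intro exI[of _ f] conjI) (simp_all add: f)
qed

lemma Fclass_UN:
  fixes X :: "'i \<Rightarrow> 'a::topological_space set"
  assumes "a \<noteq> ozero" "\<not> oeven a" "countable I" "I \<noteq> {}"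
    and "\<forall>i\<in>I. \<exists>b. oless b a \<and> X i \<in> Fclass b"
  shows "(\<Union>i\<in>I. X i) \<in> Fclass a"
proof -
  obtain f :: "nat \<Rightarrow> 'a set" where f: "range f = X ` I" "\<forall>k. \<exists>b. oless b a \<and> f k \<in> Fclass b"
    using countable_family_as_sequence[where P = "\<lambda>Y. \<exists>b. oless b a \<and> Y \<in> Fclass b",
        OF assms(3-5)] .
  show ?thesis
    unfolding Fclass_odd_eq[OF assms(1,2)] mem_Collect_eq
    by (intro exI[of _ f] conjI) (simp_all add: f)
qed

lemma Fclass_INT_E:
  assumes "A \<in> Fclass a" "a \<noteq> ozero" "oeven a"
  obtains f :: "nat \<Rightarrow> 'a::topological_space set"
  where "A = \<Inter>(range f)" "\<forall>k. \<exists>b. oless b a \<and> f k \<in> Fclass b"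
  using assms(1) unfolding Fclass_even_eq[OF assms(2,3)] by blast

lemma Fclass_UN_E:
  assumes "A \<in> Fclass a" "a \<noteq> ozero" "\<not> oeven a"
  obtains f :: "nat \<Rightarrow> 'a::topological_space set"
  where "A = \<Union>(range f)" "\<forall>k. \<exists>b. oless b a \<and> f k \<in> Fclass b"
  using assms(1) unfolding Fclass_odd_eq[OF assms(2,3)] by blast

lemma Fclass_mono_less:
  assumes "oless b a"
  shows "Fclass b \<subseteq> Fclass a"
proof
  fix A assume "A \<in> Fclass b"
  then have below: "\<forall>i\<in>UNIV. \<exists>c. oless c a \<and> (\<lambda>_::nat. A) i \<in> Fclass c"
    using assms by blast
  have "a \<noteq> ozero" using assms not_oless_ozero by metis
  then show "A \<in> Fclass a"
    using Fclass_INT[OF _ _ _ _ below] Fclass_UN[OF _ _ _ _ below] by (cases "oeven a") simp_all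
qed

lemma Fclass_mono: "(b, a) \<in> W \<Longrightarrow> Fclass b \<subseteq> Fclass a"
  using Fclass_mono_less unfolding oless_def by (cases "b = a") auto

lemma closed_in_Fclass: "closed A \<Longrightarrow> a \<in> Field W \<Longrightarrow> A \<in> Fclass a"
  using Fclass_mono[OF ozero_least] Fclass_ozero by blast

lemma Fclass_Int_even:
  fixes A B :: "'a::topological_space set"
  assumes l: "limit_or_zero l"
    and A: "A \<in> Fclass (oadd_nat l (2 * m))" and B: "B \<in> Fclass (oadd_nat l (2 * m))"
  shows "A \<inter> B \<in> Fclass (oadd_nat l (2 * m))"
proof (cases "oadd_nat l (2 * m) = ozero")
  case True
  then show ?thesis using A B by (simp add: Fclass_ozero closed_Int)
next
  case False
  note even = oeven_oadd_nat_double[OF l]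
  obtain f :: "nat \<Rightarrow> 'a set"
    where f: "A = \<Inter>(range f)" "\<forall>k. \<exists>b. oless b (oadd_nat l (2 * m)) \<and> f k \<in> Fclass b"
    using Fclass_INT_E[OF A False even] by metis
  obtain g :: "nat \<Rightarrow> 'a set"
    where g: "B = \<Inter>(range g)" "\<forall>k. \<exists>b. oless b (oadd_nat l (2 * m)) \<and> g k \<in> Fclass b"
    using Fclass_INT_E[OF B False even] by metis
  have "A \<inter> B = (\<Inter>i\<in>UNIV. case_sum f g i)"
    unfolding f g UNIV_sum by (simp add: INT_Un image_image)
  also have "\<dots> \<in> Fclass (oadd_nat l (2 * m))"
    using f(2) g(2) by (intro Fclass_INT[OF False even]) (auto split: sum.split)
  finally show ?thesis .
qed

lemma Fclass_UN_odd:
  fixes X :: "'i \<Rightarrow> 'a::topological_space set"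
  assumes l: "limit_or_zero l" and "countable I" "I \<noteq> {}"
    and "\<forall>i\<in>I. X i \<in> Fclass (oadd_nat l (2 * m))"
  shows "(\<Union>i\<in>I. X i) \<in> Fclass (oadd_nat l (Suc (2 * m)))"
proof -
  have F: "oadd_nat l (2 * m) \<in> Field W"
    using oadd_nat_in_Field[OF limit_or_zero_in_Field[OF l]] .
  show ?thesis
    using assms oless_osucc[OF F] osucc_ne_ozero[OF F] not_oeven_oadd_nat_odd[OF l]
    by (intro Fclass_UN) auto
qed

lemma Fclass_Int_odd:
  fixes A B :: "'a::topological_space set"
  assumes l: "limit_or_zero l"
    and A: "A \<in> Fclass (oadd_nat l (Suc (2 * m)))" and B: "B \<in> Fclass (oadd_nat l (Suc (2 * m)))"
  shows "A \<inter> B \<in> Fclass (oadd_nat l (Suc (2 * m)))"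
proof -
  define b where "b = oadd_nat l (2 * m)"
  have b: "b \<in> Field W"
    unfolding b_def using oadd_nat_in_Field[OF limit_or_zero_in_Field[OF l]] .
  have nz: "osucc b \<noteq> ozero" using osucc_ne_ozero[OF b] .
  have odd: "\<not> oeven (osucc b)" using not_oeven_oadd_nat_odd[OF l] unfolding b_def by simp
  have lower: "X \<in> Fclass b" if "\<exists>c. oless c (osucc b) \<and> X \<in> Fclass c" for X
    using that oless_osucc_iff_le[OF b] Fclass_mono by blast
  have A': "A \<in> Fclass (osucc b)" and B': "B \<in> Fclass (osucc b)"
    using A B unfolding b_def by simp_all
  obtain f :: "nat \<Rightarrow> 'a set"
    where f: "A = \<Union>(range f)" "\<forall>k. \<exists>c. oless c (osucc b) \<and> f k \<in> Fclass c"
    using Fclass_UN_E[OF A' nz odd] by metis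
  obtain g :: "nat \<Rightarrow> 'a set"
    where g: "B = \<Union>(range g)" "\<forall>k. \<exists>c. oless c (osucc b) \<and> g k \<in> Fclass c"
    using Fclass_UN_E[OF B' nz odd] by metis
  have "f i \<inter> g j \<in> Fclass b" for i j
    using Fclass_Int_even[OF l lower[OF f(2)[rule_format], unfolded b_def]
        lower[OF g(2)[rule_format], unfolded b_def]]
    unfolding b_def .
  then have "(\<Union>(i, j)\<in>UNIV. f i \<inter> g j) \<in> Fclass (oadd_nat l (Suc (2 * m)))"
    unfolding b_def by (intro Fclass_UN_odd[OF l]) auto
  moreover have "A \<inter> B = (\<Union>(i, j)\<in>UNIV. f i \<inter> g j)"
    unfolding f g by blast
  ultimately show ?thesis by simp
qed

lemma finite_Int_closed:
  assumes "\<forall>A\<in>\<F>. \<forall>B\<in>\<F>. A \<inter> B \<in> \<F>" "finite K" "B \<in> \<F>" "\<forall>k\<in>K. V k \<in> \<F>"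
  shows "B \<inter> (\<Inter>k\<in>K. V k) \<in> \<F>"
  using assms(2-4)
proof (induction K rule: finite_induct)
  case (insert k K)
  then have "(B \<inter> (\<Inter>k\<in>K. V k)) \<inter> V k \<in> \<F>" using assms(1) by blast
  then show ?case by (simp add: Int_ac)
qed simp

section \<open>Well-founded trees and leaf rank\<close>

lemma extends_append: "extends (s @ u) s"
  unfolding extends_def by blast

lemma tree_prefix: "is_tree T \<Longrightarrow> s @ u \<in> T \<Longrightarrow> s \<in> T"
  unfolding is_tree_def using extends_append by blast

lemma wf_child_rel:
  assumes tree: "is_tree T" and wft: "well_founded_tree T"
  shows "wf (child_rel T)"
proof (rule ccontr)
  assume "\<not> wf (child_rel T)"
  then obtain f where f: "\<forall>i. (f (Suc i), f i) \<in> child_rel T"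
    using wf_iff_no_infinite_down_chain by blast
  have step: "\<exists>n. f (Suc i) = f i @ [n]" and inT: "f (Suc i) \<in> T" for i
    using f[rule_format, of i] unfolding child_rel_def by auto
  have grows: "\<exists>w. f (i + d) = f i @ w" for i d
  proof (induction d)
    case (Suc d)
    then show ?case using step[of "i + d"] by fastforce
  qed simp
  have len: "length (f i) = length (f 0) + i" for i
  proof (induction i)
    case (Suc i)
    then show ?case using step[of i] by auto
  qed simp
  text \<open>The infinite branch: its \<open>j\<close>-th entry is fixed once \<open>f (Suc j)\<close> is reached.\<close>
  define x where "x j = f (Suc j) ! j" for j
  have "map x [0..<k] \<in> T" for k
  proof -
    have "map x [0..<k] = take k (f (Suc k))"
    proof (rule nth_equalityI)
      show "length (map x [0..<k]) = length (take k (f (Suc k)))" using len[of "Suc k"] by simp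
    next
      fix j assume "j < length (map x [0..<k])"
      then have j: "j < k" by simp
      obtain w where "f (Suc j + (k - j)) = f (Suc j) @ w" using grows by blast
      then have "f (Suc k) = f (Suc j) @ w" using j by simp
      moreover have "j < length (f (Suc j))" using len[of "Suc j"] by simp
      ultimately show "map x [0..<k] ! j = take k (f (Suc k)) ! j"
        using j by (simp add: x_def nth_append)
    qed
    then show ?thesis
      using tree_prefix[OF tree] inT[of k] by (metis append_take_drop_id)
  qed
  then show False using wft unfolding well_founded_tree_def by blast
qed

lemma countable_ims: "countable (ims T t)"
proof -
  have "ims T t = (\<lambda>n. t @ [n]) ` {n. t @ [n] \<in> T}" unfolding ims_def by blast
  then show ?thesis by simp
qed

lemma node_rank_unfold:
  assumes "wf (child_rel T)"
  shows "node_rank T t = osup ((\<lambda>s. osucc (node_rank T s)) ` ims T t)"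
proof -
  have "node_rank T t = osup ((\<lambda>s. osucc (cut (node_rank T) (child_rel T) t s)) ` ims T t)"
    unfolding node_rank_def by (subst wfrec[OF assms]) simp
  also have "(\<lambda>s. osucc (cut (node_rank T) (child_rel T) t s)) ` ims T t
      = (\<lambda>s. osucc (node_rank T s)) ` ims T t"
    by (rule image_cong) (auto simp: ims_def child_rel_def cut_apply)
  finally show ?thesis .
qed

lemma node_rank_in_Field:
  assumes wf: "wf (child_rel T)"
  shows "node_rank T t \<in> Field W"
proof (induction t rule: wf_induct[OF wf])
  case (1 t)
  have "(s, t) \<in> child_rel T" if "s \<in> ims T t" for s
    using that unfolding ims_def child_rel_def by blast
  then have "(\<lambda>s. osucc (node_rank T s)) ` ims T t \<subseteq> Field W"
    using 1 osucc_in_Field by blast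
  then show ?case
    unfolding node_rank_unfold[OF wf, of t] using countable_ims by (simp add: osup_in_Field)
qed

lemma osucc_node_rank_child_le:
  assumes wf: "wf (child_rel T)" and child: "t @ [k] \<in> T"
  shows "(osucc (node_rank T (t @ [k])), node_rank T t) \<in> W"
proof -
  have "(\<lambda>s. osucc (node_rank T s)) ` ims T t \<subseteq> Field W"
    using node_rank_in_Field[OF wf] osucc_in_Field by blast
  moreover have "t @ [k] \<in> ims T t" using child unfolding ims_def by blast
  ultimately show ?thesis
    unfolding node_rank_unfold[OF wf, of t] using countable_ims by (simp add: osup_upper)
qed

lemma node_rank_child_less:
  "wf (child_rel T) \<Longrightarrow> t @ [k] \<in> T \<Longrightarrow> oless (node_rank T (t @ [k])) (node_rank T t)"
  by (rule oless_le_trans[OF oless_osucc[OF node_rank_in_Field] osucc_node_rank_child_le])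

lemma node_rank_finite_branching:
  assumes wf: "wf (child_rel T)" and "finite (ims T t)" "ims T t \<noteq> {}"
  shows "\<exists>s\<in>ims T t. node_rank T t = osucc (node_rank T s)"
proof -
  let ?A = "(\<lambda>s. osucc (node_rank T s)) ` ims T t"
  have "?A \<subseteq> Field W" using node_rank_in_Field[OF wf] osucc_in_Field by blast
  then have "osup ?A \<in> ?A" using assms(2,3) by (intro osup_finite_in) auto
  then show ?thesis unfolding node_rank_unfold[OF wf, of t] by auto
qed

lemma mem_subtree_iff [simp]: "u \<in> subtree T t \<longleftrightarrow> t @ u \<in> T"
  unfolding subtree_def by simp

lemma subtree_is_tree: "is_tree T \<Longrightarrow> is_tree (subtree T t)"
  unfolding is_tree_def subtree_def extends_def by (metis append.assoc mem_Collect_eq)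

lemma subtree_append: "subtree (subtree T t) u = subtree T (t @ u)"
  unfolding subtree_def by simp

lemma subtree_Nil [simp]: "subtree T [] = T"
  unfolding subtree_def by simp

section \<open>The operation \<open>R\<^sub>T\<close>\<close>

lemma admissible_subtree:
  assumes adm: "admissible S \<phi>" and k: "[k] \<in> S"
  shows "admissible (subtree S [k]) (\<lambda>u. drop k (\<phi> (k # u)))"
    and "k # u \<in> S \<Longrightarrow> \<phi> (k # u) = \<phi> [k] @ drop k (\<phi> (k # u))"
proof -
  have mono: "\<And>s t. s \<in> S \<Longrightarrow> t \<in> S \<Longrightarrow> extends t s \<Longrightarrow> extends (\<phi> t) (\<phi> s)"
    and len: "\<And>t. t \<in> S \<Longrightarrow> length (\<phi> t) = sum_list t"
    using adm unfolding admissible_def by blast+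
  have split: "\<phi> (k # u) = \<phi> [k] @ drop k (\<phi> (k # u))" if "k # u \<in> S" for u
  proof -
    have "extends (\<phi> (k # u)) (\<phi> [k])"
      using mono[OF k that] extends_append[of "[k]" u] by simp
    then show ?thesis using len[OF k] unfolding extends_def by auto
  qed
  then show "k # u \<in> S \<Longrightarrow> \<phi> (k # u) = \<phi> [k] @ drop k (\<phi> (k # u))" .
  show "admissible (subtree S [k]) (\<lambda>u. drop k (\<phi> (k # u)))"
    unfolding admissible_def
  proof (intro conjI ballI impI; simp)
    fix u v assume "k # u \<in> S" "k # v \<in> S" "extends v u"
    then have "extends (\<phi> (k # v)) (\<phi> (k # u))"
      using mono unfolding extends_def by force
    then show "extends (drop k (\<phi> (k # v))) (drop k (\<phi> (k # u)))"
      unfolding extends_def by (metis append_eq_conv_conj drop_append length_drop)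
  next
    fix u assume "k # u \<in> S"
    then show "length (\<phi> (k # u)) - k = sum_list u" using len by simp
  qed
qed

lemma admissible_join:
  assumes tree: "is_tree S"
    and parts: "\<And>k. [k] \<in> S \<Longrightarrow> length (p k) = k \<and> admissible (subtree S [k]) (\<psi> k)"
  shows "admissible S (\<lambda>t. case t of [] \<Rightarrow> [] | k # u \<Rightarrow> p k @ \<psi> k u)"
  unfolding admissible_def
proof (intro conjI ballI impI)
  fix s t assume s: "s \<in> S" and t: "t \<in> S" and "extends t s"
  then obtain w where t_eq: "t = s @ w" unfolding extends_def by blast
  show "extends (case t of [] \<Rightarrow> [] | k # u \<Rightarrow> p k @ \<psi> k u)
                (case s of [] \<Rightarrow> [] | k # u \<Rightarrow> p k @ \<psi> k u)"
  proof (cases s)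
    case Nil
    then show ?thesis unfolding extends_def by simp
  next
    case (Cons k u)
    then have "[k] \<in> S" "u \<in> subtree S [k]" "u @ w \<in> subtree S [k]"
      using tree_prefix[OF tree, of "[k]" u] s t t_eq by auto
    then have "extends (\<psi> k (u @ w)) (\<psi> k u)"
      using parts extends_append unfolding admissible_def by blast
    then show ?thesis using t_eq Cons unfolding extends_def by auto
  qed
next
  fix t assume t: "t \<in> S"
  show "length (case t of [] \<Rightarrow> [] | k # u \<Rightarrow> p k @ \<psi> k u) = sum_list t"
  proof (cases t)
    case (Cons k u)
    then have "[k] \<in> S" "u \<in> subtree S [k]"
      using tree_prefix[OF tree, of "[k]" u] t by auto
    then show ?thesis using parts Cons unfolding admissible_def by auto
  qed simp
qed

lemma R_op_unfold:
  assumes tree: "is_tree S"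
  shows "R_op S C = C [] \<inter> (\<Inter>k\<in>{k. [k] \<in> S}. \<Union>s\<in>{s. length s = k}.
            R_op (subtree S [k]) (\<lambda>u. C (s @ u)))"
proof (intro equalityI subsetI)
  fix x assume "x \<in> R_op S C"
  then obtain \<phi> where x0: "x \<in> C []" and adm: "admissible S \<phi>" and x: "\<forall>t\<in>S. x \<in> C (\<phi> t)"
    unfolding R_op_def by blast
  have "x \<in> (\<Union>s\<in>{s. length s = k}. R_op (subtree S [k]) (\<lambda>u. C (s @ u)))" if k: "[k] \<in> S" for k
  proof (rule UN_I)
    show "\<phi> [k] \<in> {s. length s = k}"
      using adm k unfolding admissible_def by simp
    show "x \<in> R_op (subtree S [k]) (\<lambda>u. C (\<phi> [k] @ u))"
      unfolding R_op_def
    proof (intro CollectI conjI exI ballI)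
      show "admissible (subtree S [k]) (\<lambda>u. drop k (\<phi> (k # u)))"
        by (rule admissible_subtree(1)[OF adm k])
      show "x \<in> C (\<phi> [k] @ [])" using x k by simp
      fix u assume "u \<in> subtree S [k]"
      then have "k # u \<in> S" by simp
      then show "x \<in> C (\<phi> [k] @ drop k (\<phi> (k # u)))"
        using x admissible_subtree(2)[OF adm k] by metis
    qed
  qed
  then show "x \<in> C [] \<inter> (\<Inter>k\<in>{k. [k] \<in> S}. \<Union>s\<in>{s. length s = k}.
            R_op (subtree S [k]) (\<lambda>u. C (s @ u)))"
    using x0 by simp
next
  fix x assume x: "x \<in> C [] \<inter> (\<Inter>k\<in>{k. [k] \<in> S}. \<Union>s\<in>{s. length s = k}.
            R_op (subtree S [k]) (\<lambda>u. C (s @ u)))"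
  then have ex: "\<forall>k\<in>{k. [k] \<in> S}. \<exists>s. \<exists>\<psi>. length s = k \<and> admissible (subtree S [k]) \<psi> \<and>
          (\<forall>u\<in>subtree S [k]. x \<in> C (s @ \<psi> u))"
    unfolding R_op_def by blast
  obtain p where ex': "\<forall>k\<in>{k. [k] \<in> S}. \<exists>\<psi>. length (p k) = k \<and> admissible (subtree S [k]) \<psi> \<and>
          (\<forall>u\<in>subtree S [k]. x \<in> C (p k @ \<psi> u))"
    using bchoice[OF ex] by (elim exE) (rule that)
  obtain \<psi> where parts: "\<forall>k\<in>{k. [k] \<in> S}. length (p k) = k \<and> admissible (subtree S [k]) (\<psi> k) \<and>
          (\<forall>u\<in>subtree S [k]. x \<in> C (p k @ \<psi> k u))"
    using bchoice[OF ex'] by (elim exE) (rule that)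
  have "x \<in> C (case t of [] \<Rightarrow> [] | k # u \<Rightarrow> p k @ \<psi> k u)" if "t \<in> S" for t
  proof (cases t)
    case (Cons k u)
    then have "[k] \<in> S" "u \<in> subtree S [k]"
      using tree_prefix[OF tree, of "[k]" u] that by auto
    then show ?thesis using parts Cons by simp
  qed (use x in simp)
  moreover have "admissible S (\<lambda>t. case t of [] \<Rightarrow> [] | k # u \<Rightarrow> p k @ \<psi> k u)"
    using parts by (intro admissible_join[OF tree]) simp
  ultimately show "x \<in> R_op S C"
    using x unfolding R_op_def by blast
qed

lemma R_op_subtree_unfold:
  "is_tree T \<Longrightarrow> R_op (subtree T t) C = C [] \<inter> (\<Inter>k\<in>{k. t @ [k] \<in> T}. \<Union>s\<in>{s. length s = k}.
            R_op (subtree T (t @ [k])) (\<lambda>u. C (s @ u)))"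
  by (subst R_op_unfold[OF subtree_is_tree]) (simp_all add: subtree_append)

lemma countable_lists_of_length: "countable {s :: nat list. length s = k}"
  by (rule countable_subset[OF subset_UNIV]) simp

lemma lists_of_length_nonempty: "{s :: nat list. length s = k} \<noteq> {}"
  using length_replicate[of k 0] by blast

lemma R_op_subtree_in_Fclass:
  fixes C :: "nat list \<Rightarrow> 'a::topological_space set"
  assumes tree: "is_tree T" and wf: "wf (child_rel T)"
    and "\<forall>s. closed (C s)" "limit_or_zero l" "node_rank T t = oadd_nat l n"
  shows "R_op (subtree T t) C \<in> Fclass (oadd_nat l (2 * n))"
  using assms(3-5)
proof (induction t arbitrary: C l n rule: wf_induct[OF wf])
  case (1 t)
  note closed = "1.prems"(1) and l = "1.prems"(2) and rank = "1.prems"(3)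
  define K where "K = {k. t @ [k] \<in> T}"
  define V where "V k = (\<Union>s\<in>{s. length s = k}. R_op (subtree T (t @ [k])) (\<lambda>u. C (s @ u)))" for k
  have unfold: "R_op (subtree T t) C = C [] \<inter> (\<Inter>k\<in>K. V k)"
    unfolding K_def V_def using R_op_subtree_unfold[OF tree] .
  have V: "\<exists>b. oless b (oadd_nat l (2 * n)) \<and> V k \<in> Fclass b" if k: "k \<in> K" for k
  proof -
    obtain lk nk where lk: "limit_or_zero lk" and rank_k: "node_rank T (t @ [k]) = oadd_nat lk nk"
      using limit_decomposition[OF node_rank_in_Field[OF wf]] by blast
    have child: "(t @ [k], t) \<in> child_rel T" using k unfolding K_def child_rel_def by blast
    have "R_op (subtree T (t @ [k])) (\<lambda>u. C (s @ u)) \<in> Fclass (oadd_nat lk (2 * nk))" for s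
      using "1.IH"[rule_format, OF child] closed lk rank_k by simp
    then have "V k \<in> Fclass (oadd_nat lk (Suc (2 * nk)))"
      unfolding V_def
      by (intro Fclass_UN_odd[OF lk countable_lists_of_length lists_of_length_nonempty]) simp
    moreover have "oless (oadd_nat lk nk) (oadd_nat l n)"
      using node_rank_child_less[OF wf, of t k] k rank rank_k unfolding K_def by simp
    then have "oless (oadd_nat lk (Suc (2 * nk))) (oadd_nat l (2 * n))"
      by (rule oadd_nat_double_less[OF l lk])
    ultimately show ?thesis by blast
  qed
  show ?case
  proof (cases "K = {}")
    case True
    then show ?thesis
      unfolding unfold
      using closed_in_Fclass[OF closed[rule_format] oadd_nat_in_Field[OF limit_or_zero_in_Field[OF l]]]
      by simp
  next
    case False
    let ?a = "oadd_nat l (2 * n)"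
    obtain b where "oless b ?a" using False V by blast
    then have "?a \<noteq> ozero" using not_oless_ozero by metis
    then have "oless ozero ?a"
      using ozero_least[OF oadd_nat_in_Field[OF limit_or_zero_in_Field[OF l]]] unfolding oless_def by simp
    moreover have "C [] \<in> Fclass ozero" using closed by (simp add: Fclass_ozero)
    ultimately have "(\<Inter>i\<in>insert 0 (Suc ` K). case_nat (C []) V i) \<in> Fclass ?a"
      using V \<open>?a \<noteq> ozero\<close> oeven_oadd_nat_double[OF l]
      by (intro Fclass_INT) (auto intro: countable_subset[OF subset_UNIV])
    then show ?thesis unfolding unfold by simp
  qed
qed

lemma R_op_in_Fclass_odd:
  fixes C :: "nat list \<Rightarrow> 'a::topological_space set"
  assumes tree: "is_tree T" and wf: "wf (child_rel T)"
    and closed: "\<forall>s. closed (C s)" and l: "limit_or_zero l"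
    and rank: "node_rank T [] = oadd_nat l (Suc m)" and fin: "finite (ims T [])"
  shows "R_op T C \<in> Fclass (oadd_nat l (Suc (2 * m)))"
proof -
  define K where "K = {k. [k] \<in> T}"
  define V where "V k = (\<Union>s\<in>{s. length s = k}. R_op (subtree T [k]) (\<lambda>u. C (s @ u)))" for k
  have unfold: "R_op T C = C [] \<inter> (\<Inter>k\<in>K. V k)"
    using R_op_subtree_unfold[OF tree, of "[]" C] by (simp add: K_def V_def)
  have "ims T [] = (\<lambda>k. [k]) ` K" unfolding ims_def K_def by auto
  then have "finite K" using fin by (simp add: finite_image_iff inj_on_def)
  moreover have "V k \<in> Fclass (oadd_nat l (Suc (2 * m)))" if k: "k \<in> K" for k
  proof -
    obtain lk nk where lk: "limit_or_zero lk" and rank_k: "node_rank T [k] = oadd_nat lk nk"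
      using limit_decomposition[OF node_rank_in_Field[OF wf]] by blast
    have "oless (oadd_nat lk nk) (osucc (oadd_nat l m))"
      using node_rank_child_less[OF wf, of "[]" k] k rank rank_k unfolding K_def by simp
    then have "(oadd_nat lk nk, oadd_nat l m) \<in> W"
      using oless_osucc_iff_le[OF oadd_nat_in_Field[OF limit_or_zero_in_Field[OF l]]] by blast
    then have "Fclass (oadd_nat lk (2 * nk)) \<subseteq> Fclass (oadd_nat l (2 * m))"
      by (intro Fclass_mono oadd_nat_double_le[OF l lk])
    moreover have "R_op (subtree T [k]) (\<lambda>u. C (s @ u)) \<in> Fclass (oadd_nat lk (2 * nk))" for s
      by (rule R_op_subtree_in_Fclass[OF tree wf _ lk rank_k]) (simp add: closed)
    ultimately show ?thesis
      unfolding V_def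
      by (intro Fclass_UN_odd[OF l countable_lists_of_length lists_of_length_nonempty]) blast
  qed
  moreover have "C [] \<in> Fclass (oadd_nat l (Suc (2 * m)))"
    using closed_in_Fclass[OF closed[rule_format] oadd_nat_in_Field[OF limit_or_zero_in_Field[OF l]]] .
  ultimately show ?thesis
    unfolding unfold using Fclass_Int_odd[OF l] by (intro finite_Int_closed) blast+
qed

lemma ims_Nil_nonempty:
  assumes "is_tree T" "T \<noteq> {}" "T \<noteq> {[]}"
  shows "ims T [] \<noteq> {}"
proof -
  have "\<not> T \<subseteq> {[]}" using assms(2,3) by blast
  then obtain k u where "k # u \<in> T" by (metis list.exhaust singletonI subsetI)
  then have "[k] \<in> ims T []" using tree_prefix[OF assms(1), of "[k]" u] unfolding ims_def by simp
  then show ?thesis by blast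
qed

theorem lemma6p5:
  fixes C :: "nat list \<Rightarrow> 'a::topological_space set"
    and T :: "nat list set" and l :: ord1 and n :: nat
  assumes "suslin_scheme C"
    and "\<forall>s. closed (C s)"
    and "is_tree T" and "T \<noteq> {}" and "well_founded_tree T"
    and "limit_or_zero l"
    and "leaf_rank T = oadd_nat l n"
  shows "R_op T C \<in> Fclass (oadd_nat l (2 * n)) \<and>
         (T \<noteq> {[]} \<and> finite (ims T []) \<longrightarrow>
           n \<ge> 1 \<and> R_op T C \<in> Fclass (oadd_nat l (2 * n - 1)))"
proof (intro conjI impI; (elim conjE)?)
  have wf: "wf (child_rel T)" using wf_child_rel[OF assms(3,5)] .
  have rank: "node_rank T [] = oadd_nat l n" using assms(7) unfolding leaf_rank_def .
  show "R_op T C \<in> Fclass (oadd_nat l (2 * n))"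
    using R_op_subtree_in_Fclass[OF assms(3) wf assms(2,6) rank] by simp
  assume "T \<noteq> {[]}" and fin: "finite (ims T [])"
  then obtain s where "node_rank T [] = osucc (node_rank T s)"
    using node_rank_finite_branching[OF wf fin ims_Nil_nonempty[OF assms(3,4)]] by blast
  then obtain m where m: "n = Suc m"
    using rank osucc_ne_limit[OF assms(6) node_rank_in_Field[OF wf]] by (cases n) auto
  then show "n \<ge> 1" by simp
  show "R_op T C \<in> Fclass (oadd_nat l (2 * n - 1))"
    using R_op_in_Fclass_odd[OF assms(3) wf assms(2,6) rank[unfolded m] fin] m by simp
qed

end
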